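(* Let $d$ be a metric on $\mathbb R^n$ induced by a norm, $\delta>0$, and let $\tilde w:\mathcal D^n(\delta)\to\mathcal D^n(\delta)$ be the $\delta$-roundoff of a contraction $w$ on $(\mathbb R^n,d)$ with contractivity factor $\lambda\in[0,1)$ and fixed point $x_f$. Then the minimal absorbing set $\mathcal M[\tilde w]$ (for $\tilde w$ in $\mathcal D^n(\delta)$) exists, is finite, and its cardinality is at most the cardinality of $\Lambda(x_f,r_0)=\{\tilde y\in\mathcal D^n(\delta):d(\tilde y,x_f)\le\theta(1-\lambda)^{-1}\}$.
   Context: For $m\in\mathbb Z^n$, $C_\delta(m)=\prod_{j=1}^n[(m_j-\tfrac12)\delta,(m_j+\tfrac12)\delta)$; $\mathcal D^n(\delta)=\{\delta m:m\in\mathbb Z^n\}\subset\mathbb R^n$. The $\delta$-roundoff of $x\in\mathbb R^n$ is $\tilde x=\delta m$ where $x\in C_\delta(m)$; the $\delta$-roundoff of $w$ is $\tilde w(\tilde x)=\widetilde{w(\tilde x)}$. $\theta:=\tfrac12\operatorname{diam}_d(C_\delta(0))$. For nonempty $C$ with $\tilde w(C)\subset C$, $\Lambda\subset C$ is absorbing for $\tilde w$ in $C$ if for every $\tilde x\in C$ there is $N$ with $\tilde w^{\circ i}(\tilde x)\in\Lambda$ for all $i\ge N$. If the intersection of all absorbing sets in $C=\mathcal D^n(\delta)$ is itself absorbing, it is the minimal absorbing set $\mathcal M[\tilde w]$ and is said to exist. *)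

theory Defs
  imports "HOL-Analysis.Analysis"
begin

text \<open>A norm on R^n (arbitrary, not necessarily Euclidean); the metric is d x y = N (x - y).\<close>
definition is_norm :: "(real^'n \<Rightarrow> real) \<Rightarrow> bool" where
  "is_norm N \<longleftrightarrow> (\<forall>x. 0 \<le> N x) \<and> (\<forall>x. N x = 0 \<longleftrightarrow> x = 0)
     \<and> (\<forall>c x. N (c *s x) = \<bar>c\<bar> * N x) \<and> (\<forall>x y. N (x + y) \<le> N x + N y)"

definition cube :: "real \<Rightarrow> int^'n \<Rightarrow> (real^'n) set" where
  "cube \<delta> m = {x. \<forall>j. (real_of_int (m$j) - 1/2) * \<delta> \<le> x$j \<and> x$j < (real_of_int (m$j) + 1/2) * \<delta>}"

definition grid :: "real \<Rightarrow> (real^'n) set" where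
  "grid \<delta> = {\<delta> *s (\<chi> j. real_of_int (m$j)) | m :: int^'n. True}"

definition roundoff :: "real \<Rightarrow> real^'n \<Rightarrow> real^'n" where
  "roundoff \<delta> x = \<delta> *s (\<chi> j. real_of_int ((THE m. x \<in> cube \<delta> m) $ j))"

definition roundoff_map :: "real \<Rightarrow> (real^'n \<Rightarrow> real^'n) \<Rightarrow> real^'n \<Rightarrow> real^'n" where
  "roundoff_map \<delta> w = (\<lambda>x. roundoff \<delta> (w x))"

definition absorbing :: "('a \<Rightarrow> 'a) \<Rightarrow> 'a set \<Rightarrow> 'a set \<Rightarrow> bool" where
  "absorbing f C \<Lambda> \<longleftrightarrow> \<Lambda> \<subseteq> C \<and> (\<forall>x\<in>C. \<exists>N. \<forall>i\<ge>N. (f ^^ i) x \<in> \<Lambda>)"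

text \<open>Intersection of all absorbing sets; it is the minimal absorbing set M[f]
  and "exists" iff it is itself absorbing.\<close>
definition min_absorbing :: "('a \<Rightarrow> 'a) \<Rightarrow> 'a set \<Rightarrow> 'a set" where
  "min_absorbing f C = \<Inter>{\<Lambda>. absorbing f C \<Lambda>}"

definition min_absorbing_exists :: "('a \<Rightarrow> 'a) \<Rightarrow> 'a set \<Rightarrow> bool" where
  "min_absorbing_exists f C \<longleftrightarrow> absorbing f C (min_absorbing f C)"

definition theta :: "(real^'n \<Rightarrow> real) \<Rightarrow> real \<Rightarrow> real" where
  "theta N \<delta> = Sup {N (x - y) | x y. x \<in> cube \<delta> (0::int^'n) \<and> y \<in> cube \<delta> 0} / 2"

end

theory Submission
  imports Defs
begin

text \<open>Rounding moves a point by a vector of the cube \<open>C\<^sub>\<delta>(0)\<close>, hence by at most \<open>\<theta>\<close> in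
  the norm \<open>N\<close>; so the rounded map satisfies \<open>N (w\<^sup>~ x - x\<^sub>f) \<le> \<theta> + \<lambda> N (x - x\<^sub>f)\<close>, and
  along an orbit \<open>N (w\<^sup>~\<^sup>k x - x\<^sub>f) \<le> \<lambda>\<^sup>k e + \<theta>/(1 - \<lambda>)\<close>. The orbit stays in a bounded,
  hence finite, part of the grid, so these distances take finitely many values; since the
  excess over \<open>\<theta>/(1 - \<lambda>)\<close> tends to zero, it eventually vanishes, i.e. the finite set
  \<open>\<Lambda>(x\<^sub>f, r\<^sub>0)\<close> is absorbing. Absorbing sets are closed under intersection, so an
  absorbing subset of \<open>\<Lambda>(x\<^sub>f, r\<^sub>0)\<close> of least cardinality lies in every absorbing set.\<close>

lemma cube_iff_floor:
  assumes "\<delta> > 0"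
  shows "x \<in> cube \<delta> m \<longleftrightarrow> m = (\<chi> j. \<lfloor>x$j / \<delta> + 1/2\<rfloor>)"
proof -
  have "(real_of_int a - 1/2) * \<delta> \<le> y \<and> y < (real_of_int a + 1/2) * \<delta>
      \<longleftrightarrow> a = \<lfloor>y / \<delta> + 1/2\<rfloor>" for a :: int and y :: real
  proof -
    have "a = \<lfloor>y / \<delta> + 1/2\<rfloor> \<longleftrightarrow> real_of_int a \<le> y / \<delta> + 1/2 \<and> y / \<delta> + 1/2 < real_of_int a + 1"
      by (metis floor_eq_iff)
    also have "\<dots> \<longleftrightarrow> (real_of_int a - 1/2) * \<delta> \<le> y \<and> y < (real_of_int a + 1/2) * \<delta>"
      using assms by (simp add: field_simps)
    finally show ?thesis by simp
  qed
  then show ?thesis unfolding cube_def by (auto simp: vec_eq_iff)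
qed

lemma roundoff_eq_floor:
  assumes "\<delta> > 0"
  shows "roundoff \<delta> x = \<delta> *s (\<chi> j. real_of_int \<lfloor>x$j / \<delta> + 1/2\<rfloor>)"
proof -
  have "(THE m. x \<in> cube \<delta> m) = (\<chi> j. \<lfloor>x$j / \<delta> + 1/2\<rfloor>)"
    using cube_iff_floor[OF assms] by auto
  then show ?thesis unfolding roundoff_def by simp
qed

lemma diff_roundoff_in_cube:
  assumes "\<delta> > 0"
  shows "x - roundoff \<delta> x \<in> cube \<delta> 0"
proof -
  have in_cube: "(real_of_int \<lfloor>x$j / \<delta> + 1/2\<rfloor> - 1/2) * \<delta> \<le> x$j
      \<and> x$j < (real_of_int \<lfloor>x$j / \<delta> + 1/2\<rfloor> + 1/2) * \<delta>" for j
    using cube_iff_floor[OF assms, of x "\<chi> j. \<lfloor>x$j / \<delta> + 1/2\<rfloor>"] unfolding cube_def by simp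
  have "(0 - 1/2) * \<delta> \<le> x$j - \<delta> * real_of_int \<lfloor>x$j / \<delta> + 1/2\<rfloor>
      \<and> x$j - \<delta> * real_of_int \<lfloor>x$j / \<delta> + 1/2\<rfloor> < (0 + 1/2) * \<delta>" for j
    using in_cube[of j] by (simp add: algebra_simps)
  then show ?thesis
    unfolding roundoff_eq_floor[OF assms] cube_def by simp
qed

lemma roundoff_in_grid: "roundoff \<delta> x \<in> grid \<delta>"
  unfolding roundoff_def grid_def by blast

lemma funpow_roundoff_map_in_grid:
  assumes "x \<in> grid \<delta>"
  shows "(roundoff_map \<delta> w ^^ k) x \<in> grid \<delta>"
  using assms by (cases k) (auto simp: roundoff_map_def roundoff_in_grid)

lemma zero_in_cube: "\<delta> > 0 \<Longrightarrow> 0 \<in> cube \<delta> 0"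
  unfolding cube_def by simp

lemma abs_component_le_of_in_cube:
  assumes "z \<in> cube \<delta> 0"
  shows "\<bar>z$j\<bar> \<le> \<delta> / 2"
proof -
  have "- (\<delta> / 2) \<le> z$j" "z$j < \<delta> / 2"
    using assms unfolding cube_def by auto
  then show ?thesis by simp
qed

lemma scale_in_cube:
  assumes "\<bar>c\<bar> < 1" "z \<in> cube \<delta> 0"
  shows "c *s z \<in> cube \<delta> 0"
proof -
  have "0 < \<delta>"
    using assms(2) unfolding cube_def by fastforce
  have "\<bar>c * z$j\<bar> < \<delta> / 2" for j
  proof -
    have "\<bar>c * z$j\<bar> \<le> \<bar>c\<bar> * (\<delta> / 2)"
      unfolding abs_mult by (rule mult_left_mono[OF abs_component_le_of_in_cube[OF assms(2)]]) simp
    also have "\<dots> < \<delta> / 2"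
      using assms(1) \<open>0 < \<delta>\<close> by simp
    finally show ?thesis .
  qed
  then have "- (\<delta> / 2) \<le> c * z$j \<and> c * z$j < \<delta> / 2" for j
    by (metis abs_less_iff less_imp_le minus_less_iff)
  then show ?thesis
    unfolding cube_def by simp
qed

lemma finite_vectors_with_finite_components:
  assumes "\<And>j. finite (B j)"
  shows "finite {v :: 'a^'n. \<forall>j. v$j \<in> B j}"
proof (rule finite_subset)
  show "{v :: 'a^'n. \<forall>j. v$j \<in> B j} \<subseteq> vec_lambda ` Pi\<^sub>E UNIV B"
  proof
    fix v :: "'a^'n"
    assume "v \<in> {v. \<forall>j. v$j \<in> B j}"
    then have "vec_nth v \<in> Pi\<^sub>E UNIV B" by auto
    then show "v \<in> vec_lambda ` Pi\<^sub>E UNIV B"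
      by (metis image_eqI vec_nth_inverse)
  qed
  show "finite (vec_lambda ` Pi\<^sub>E UNIV B :: ('a^'n) set)"
    using assms by (intro finite_imageI finite_PiE) auto
qed

lemma finite_grid_Int_bounded:
  fixes S :: "(real^'n) set"
  assumes "\<delta> > 0" "bounded S"
  shows "finite (grid \<delta> \<inter> S)"
proof -
  obtain B where B: "\<And>x. x \<in> S \<Longrightarrow> norm x \<le> B"
    using assms(2) unfolding bounded_iff by blast
  define K where "K = \<lceil>B / \<delta>\<rceil>"
  have "grid \<delta> \<inter> S \<subseteq> {v. \<forall>j. v$j \<in> (\<lambda>k. \<delta> * real_of_int k) ` {-K..K}}"
  proof (intro subsetI CollectI allI)
    fix v j
    assume v: "v \<in> grid \<delta> \<inter> S"
    then obtain m :: "int^'n" where m: "v = \<delta> *s (\<chi> j. real_of_int (m$j))"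
      unfolding grid_def by blast
    have "\<delta> * \<bar>real_of_int (m$j)\<bar> \<le> B"
      using component_le_norm_cart[of v j] B[of v] v m assms(1) by (simp add: abs_mult)
    then have "\<bar>real_of_int (m$j)\<bar> \<le> B / \<delta>"
      using assms(1) by (simp add: field_simps)
    then have "\<bar>real_of_int (m$j)\<bar> \<le> real_of_int K"
      unfolding K_def using le_of_int_ceiling order_trans by blast
    then have "m$j \<in> {-K..K}" by auto
    then show "v$j \<in> (\<lambda>k. \<delta> * real_of_int k) ` {-K..K}"
      using m by (intro rev_image_eqI[of "m$j"]) simp_all
  qed
  then show ?thesis
    using finite_vectors_with_finite_components[of "\<lambda>_. (\<lambda>k. \<delta> * real_of_int k) ` {-K..K}"]
    by (auto intro: finite_subset)
qed

lemma absorbing_iff_eventually: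
  "absorbing f C \<Lambda> \<longleftrightarrow> \<Lambda> \<subseteq> C \<and> (\<forall>x\<in>C. \<forall>\<^sub>F i in sequentially. (f ^^ i) x \<in> \<Lambda>)"
  unfolding absorbing_def eventually_sequentially by simp

lemma absorbing_Int:
  assumes "absorbing f C A" "absorbing f C B"
  shows "absorbing f C (A \<inter> B)"
  using assms unfolding absorbing_iff_eventually by (auto intro: eventually_conj)

lemma min_absorbing_exists_and_subset_of_finite:
  assumes "absorbing f C L" "finite L"
  shows "min_absorbing_exists f C \<and> min_absorbing f C \<subseteq> L"
proof -
  obtain B where B: "absorbing f C B" "B \<subseteq> L"
    and least: "\<And>B'. absorbing f C B' \<Longrightarrow> B' \<subseteq> L \<Longrightarrow> card B \<le> card B'"
    using ex_has_least_nat[of "\<lambda>B. absorbing f C B \<and> B \<subseteq> L" L card] assms(1) by blast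
  have "finite B"
    using B(2) assms(2) by (rule finite_subset)
  have "B \<subseteq> A" if "absorbing f C A" for A
  proof -
    have "card B \<le> card (A \<inter> B)"
      using least absorbing_Int[OF that B(1)] B(2) by blast
    then have "A \<inter> B = B"
      using \<open>finite B\<close> by (metis Int_lower2 card_seteq)
    then show ?thesis by blast
  qed
  then have "min_absorbing f C = B"
    unfolding min_absorbing_def using B(1) by blast
  then show ?thesis
    unfolding min_absorbing_exists_def using B by simp
qed

lemma perturbed_contraction_bound:
  fixes a :: "nat \<Rightarrow> real"
  assumes "0 \<le> c" "0 \<le> lam" "lam < 1" "\<And>k. a (Suc k) \<le> c + lam * a k"
  shows "a k \<le> lam ^ k * a 0 + c / (1 - lam)"
proof (induction k)
  case 0
  show ?case using assms(1,3) by simp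
next
  case (Suc k)
  have "a (Suc k) \<le> c + lam * (lam ^ k * a 0 + c / (1 - lam))"
    using assms(4)[of k] mult_left_mono[OF Suc assms(2)] by linarith
  also have "\<dots> = lam ^ Suc k * a 0 + c / (1 - lam)"
    using assms(3) by (simp add: field_simps)
  finally show ?case .
qed

lemma eventually_le_of_finite_range:
  fixes u e :: "nat \<Rightarrow> real"
  assumes "finite (range u)" "e \<longlonglongrightarrow> 0" "\<And>k. u k \<le> R + e k"
  shows "\<forall>\<^sub>F k in sequentially. u k \<le> R"
proof -
  define S where "S = {v \<in> range u. R < v}"
  have "finite S"
    using assms(1) by (simp add: S_def)
  show ?thesis
  proof (cases "S = {}")
    case True
    then show ?thesis by (auto simp: S_def not_less)
  next
    case False
    then have "0 < Min S - R"
      using \<open>finite S\<close> Min_in[of S] by (auto simp: S_def)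
    with assms(2) have "\<forall>\<^sub>F k in sequentially. e k < Min S - R"
      by (rule order_tendstoD)
    then show ?thesis
    proof (rule eventually_mono)
      fix k
      assume "e k < Min S - R"
      then have "u k \<notin> S"
        using assms(3)[of k] Min_le[OF \<open>finite S\<close>] by force
      then show "u k \<le> R" by (auto simp: S_def)
    qed
  qed
qed

context
  fixes N :: "real^'n \<Rightarrow> real"
  assumes N: "is_norm N"
begin

lemma is_norm_nonneg: "0 \<le> N x"
  using N unfolding is_norm_def by blast

lemma is_norm_eq_0_iff: "N x = 0 \<longleftrightarrow> x = 0"
  using N unfolding is_norm_def by blast

lemma is_norm_scale: "N (c *s x) = \<bar>c\<bar> * N x"
  using N unfolding is_norm_def by blast

lemma is_norm_triangle: "N (x + y) \<le> N x + N y"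
  using N unfolding is_norm_def by blast

lemma is_norm_minus_commute: "N (x - y) = N (y - x)"
  by (metis is_norm_scale abs_minus_cancel abs_one mult_1 vector_sneg_minus1 minus_diff_eq)

lemma is_norm_triangle_diff: "N (x - z) \<le> N (x - y) + N (y - z)"
  using is_norm_triangle[of "x - y" "y - z"] by simp

lemma is_norm_sum: "finite S \<Longrightarrow> N (sum f S) \<le> (\<Sum>i\<in>S. N (f i))"
proof (induction S rule: finite_induct)
  case empty
  then show ?case using is_norm_eq_0_iff[of 0] by simp
next
  case (insert a S)
  then show ?case using is_norm_triangle[of "f a" "sum f S"] by simp
qed

lemma is_norm_le_sum_axis: "N v \<le> (\<Sum>j\<in>UNIV. \<bar>v$j\<bar> * N (axis j 1))"
proof -
  have "N v = N (\<Sum>j\<in>UNIV. (v$j) *s axis j 1)"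
    by (simp add: basis_expansion)
  also have "\<dots> \<le> (\<Sum>j\<in>UNIV. N ((v$j) *s axis j 1))"
    by (simp add: is_norm_sum)
  finally show ?thesis
    by (simp add: is_norm_scale)
qed

lemma is_norm_le_norm: "N v \<le> (\<Sum>j\<in>UNIV. N (axis j 1)) * norm v"
proof -
  have "(\<Sum>j\<in>UNIV. \<bar>v$j\<bar> * N (axis j 1)) \<le> (\<Sum>j\<in>UNIV. norm v * N (axis j 1))"
    by (intro sum_mono mult_right_mono component_le_norm_cart is_norm_nonneg)
  then show ?thesis
    using is_norm_le_sum_axis[of v] by (simp add: sum_distrib_left mult.commute)
qed

lemma continuous_on_is_norm: "continuous_on S N"
proof -
  let ?K = "\<Sum>j\<in>UNIV. N (axis j 1)"
  have "?K-lipschitz_on S N"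
  proof (rule lipschitz_onI)
    fix x y
    have "dist (N x) (N y) \<le> N (x - y)"
      using is_norm_triangle[of y "x - y"] is_norm_triangle[of x "y - x"]
        is_norm_minus_commute[of x y]
      by (simp add: dist_real_def)
    also have "\<dots> \<le> ?K * dist x y"
      unfolding dist_norm by (rule is_norm_le_norm)
    finally show "dist (N x) (N y) \<le> ?K * dist x y" .
    show "0 \<le> ?K"
      by (simp add: sum_nonneg is_norm_nonneg)
  qed
  then show ?thesis
    by (rule lipschitz_on_continuous_on)
qed

text \<open>\<open>N\<close> attains a positive minimum on the Euclidean unit sphere.\<close>
lemma is_norm_lower_bound:
  obtains c where "c > 0" "\<And>v. c * norm v \<le> N v"
proof -
  obtain u where u: "norm u = 1" and min: "\<And>v. norm v = 1 \<Longrightarrow> N u \<le> N v"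
    using continuous_attains_inf[OF compact_sphere, of 0 1 N] continuous_on_is_norm by auto
  have "N u > 0"
    using u is_norm_nonneg[of u] is_norm_eq_0_iff[of u] by fastforce
  moreover have "N u * norm v \<le> N v" for v
  proof (cases "v = 0")
    case True
    then show ?thesis by (simp add: is_norm_nonneg)
  next
    case False
    then have "N u \<le> N ((1 / norm v) *s v)"
      by (intro min) (simp add: scalar_mult_eq_scaleR)
    then show ?thesis
      using False by (simp add: is_norm_scale field_simps)
  qed
  ultimately show ?thesis using that by blast
qed

lemma bounded_is_norm_ball: "bounded {y. N (y - p) \<le> r}"
proof -
  obtain c where c: "c > 0" "\<And>v. c * norm v \<le> N v"
    using is_norm_lower_bound by blast
  have "norm y \<le> (r + N p) / c" if "N (y - p) \<le> r" for y
    using c(2)[of y] is_norm_triangle[of "y - p" p] that c(1) by (simp add: field_simps)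
  then show ?thesis
    unfolding bounded_iff by blast
qed

lemma finite_grid_is_norm_ball:
  assumes "\<delta> > 0"
  shows "finite {y \<in> grid \<delta>. N (y - p) \<le> r}"
  using finite_grid_Int_bounded[OF assms bounded_is_norm_ball[of p r]]
  by (simp add: Collect_conj_eq)

lemma bdd_above_is_norm_diff_cube:
  "bdd_above {N (x - y) | x y. x \<in> cube \<delta> (0::int^'n) \<and> y \<in> cube \<delta> 0}"
proof (rule bdd_aboveI, safe)
  fix x y :: "real^'n"
  assume "x \<in> cube \<delta> 0" "y \<in> cube \<delta> 0"
  then have "\<bar>(x - y)$j\<bar> \<le> \<delta>" for j
    using abs_component_le_of_in_cube[of x \<delta> j] abs_component_le_of_in_cube[of y \<delta> j] by simp
  then have "(\<Sum>j\<in>UNIV. \<bar>(x - y)$j\<bar> * N (axis j 1)) \<le> (\<Sum>j\<in>UNIV. \<delta> * N (axis j 1))"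
    by (intro sum_mono mult_right_mono is_norm_nonneg)
  then show "N (x - y) \<le> (\<Sum>j\<in>UNIV. \<delta> * N (axis j 1))"
    using is_norm_le_sum_axis[of "x - y"] by linarith
qed

text \<open>The cube is half-open, so \<open>-z\<close> need not lie in it; but \<open>-t z\<close> does for \<open>t < 1\<close>,
  which gives \<open>(1 + t) N z \<le> 2\<theta>\<close>, and \<open>t \<rightarrow> 1\<close> yields the claim.\<close>
lemma is_norm_le_theta:
  assumes "z \<in> cube \<delta> 0"
  shows "N z \<le> theta N \<delta>"
proof -
  have "(1 + t) * N z \<le> 2 * theta N \<delta>" if t: "t \<in> {0<..<1}" for t
  proof -
    have "(- t) *s z \<in> cube \<delta> 0"
      using t assms by (intro scale_in_cube) auto
    moreover have "(1 + t) *s z = z - (- t) *s z"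
      by (simp add: vec_eq_iff algebra_simps)
    ultimately have "N ((1 + t) *s z) \<in> {N (x - y) | x y. x \<in> cube \<delta> (0::int^'n) \<and> y \<in> cube \<delta> 0}"
      using assms by (metis (mono_tags, lifting) mem_Collect_eq)
    then have "N ((1 + t) *s z) \<le> 2 * theta N \<delta>"
      unfolding theta_def using bdd_above_is_norm_diff_cube by (simp add: cSup_upper)
    moreover have "\<bar>1 + t\<bar> = 1 + t"
      using t by simp
    ultimately show ?thesis
      by (metis is_norm_scale)
  qed
  then have "\<forall>\<^sub>F t in at_left 1. (1 + t) * N z \<le> 2 * theta N \<delta>"
    using eventually_at_left_real[of 0 "1::real"] by (auto elim: eventually_mono)
  moreover have "((\<lambda>t. (1 + t) * N z) \<longlongrightarrow> 2 * N z) (at_left 1)"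
    by (auto intro!: tendsto_eq_intros)
  ultimately have "2 * N z \<le> 2 * theta N \<delta>"
    by (intro tendsto_upperbound) auto
  then show ?thesis by simp
qed

lemma theta_nonneg:
  assumes "\<delta> > 0"
  shows "0 \<le> theta N \<delta>"
  using is_norm_le_theta[OF zero_in_cube[OF assms]] is_norm_eq_0_iff[of 0] by simp

lemma is_norm_roundoff_map_diff_fixpoint:
  assumes "\<delta> > 0" "\<forall>x y. N (w x - w y) \<le> lam * N (x - y)" "w xf = xf"
  shows "N (roundoff_map \<delta> w x - xf) \<le> theta N \<delta> + lam * N (x - xf)"
proof -
  have "N (roundoff \<delta> (w x) - xf) \<le> N (roundoff \<delta> (w x) - w x) + N (w x - w xf)"
    using is_norm_triangle_diff[of "roundoff \<delta> (w x)" xf "w x"] assms(3) by simp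
  also have "N (roundoff \<delta> (w x) - w x) \<le> theta N \<delta>"
    using is_norm_le_theta[OF diff_roundoff_in_cube[OF assms(1)]] is_norm_minus_commute by simp
  also have "N (w x - w xf) \<le> lam * N (x - xf)"
    using assms(2,3) by blast
  finally show ?thesis
    by (simp add: roundoff_map_def)
qed

lemma absorbing_roundoff_map_ball:
  assumes "\<delta> > 0" "0 \<le> lam" "lam < 1"
    and "\<forall>x y. N (w x - w y) \<le> lam * N (x - y)" "w xf = xf"
  shows "absorbing (roundoff_map \<delta> w) (grid \<delta>) {y \<in> grid \<delta>. N (y - xf) \<le> theta N \<delta> / (1 - lam)}"
proof -
  define f where "f = roundoff_map \<delta> w"
  define R where "R = theta N \<delta> / (1 - lam)"
  have eventually_close: "\<forall>\<^sub>F k in sequentially. N ((f ^^ k) x - xf) \<le> R"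
    if x: "x \<in> grid \<delta>" for x
  proof -
    define u where "u k = N ((f ^^ k) x - xf)" for k
    have bound: "u k \<le> R + lam ^ k * u 0" for k
      using perturbed_contraction_bound[of "theta N \<delta>" lam u k] theta_nonneg[OF assms(1)] assms(2,3)
        is_norm_roundoff_map_diff_fixpoint[OF assms(1,4,5)]
      by (simp add: u_def f_def R_def)
    have decay: "lam ^ k * u 0 \<le> u 0" for k
      using assms(2,3) by (simp add: u_def is_norm_nonneg mult_left_le_one_le power_le_one)
    have "(f ^^ k) x \<in> {y \<in> grid \<delta>. N (y - xf) \<le> R + u 0}" for k
      using bound[of k] decay[of k] funpow_roundoff_map_in_grid[OF x, of k w, folded f_def]
      by (simp add: u_def)
    then have "range u \<subseteq> (\<lambda>y. N (y - xf)) ` {y \<in> grid \<delta>. N (y - xf) \<le> R + u 0}"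
      by (auto simp: u_def)
    then have "finite (range u)"
      by (rule finite_subset) (intro finite_imageI finite_grid_is_norm_ball assms(1))
    moreover have "(\<lambda>k. lam ^ k * u 0) \<longlonglongrightarrow> 0"
      using assms(2,3) by (intro tendsto_mult_left_zero LIMSEQ_power_zero) simp
    ultimately show ?thesis
      unfolding u_def using bound[unfolded u_def] by (rule eventually_le_of_finite_range)
  qed
  show ?thesis
    unfolding absorbing_iff_eventually
  proof (intro conjI ballI)
    fix x :: "real^'n"
    assume x: "x \<in> grid \<delta>"
    show "\<forall>\<^sub>F k in sequentially. (roundoff_map \<delta> w ^^ k) x \<in> {y \<in> grid \<delta>. N (y - xf) \<le> theta N \<delta> / (1 - lam)}"
      using eventually_close[OF x]
      by (rule eventually_mono) (simp add: f_def R_def funpow_roundoff_map_in_grid[OF x])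
  qed blast
qed

end

theorem corollary2:
  fixes N :: "real^'n \<Rightarrow> real" and w :: "real^'n \<Rightarrow> real^'n"
    and \<delta> lam :: real and xf :: "real^'n"
  assumes "is_norm N"
    and "\<delta> > 0"
    and "0 \<le> lam" and "lam < 1"
    and "\<forall>x y. N (w x - w y) \<le> lam * N (x - y)"
    and "w xf = xf"
  shows "min_absorbing_exists (roundoff_map \<delta> w) (grid \<delta>)
    \<and> finite (min_absorbing (roundoff_map \<delta> w) (grid \<delta>))
    \<and> card (min_absorbing (roundoff_map \<delta> w) (grid \<delta>))
        \<le> card {y \<in> grid \<delta>. N (y - xf) \<le> theta N \<delta> / (1 - lam)}"
proof -
  let ?L = "{y \<in> grid \<delta>. N (y - xf) \<le> theta N \<delta> / (1 - lam)}"
  have "absorbing (roundoff_map \<delta> w) (grid \<delta>) ?L"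
    by (rule absorbing_roundoff_map_ball[OF assms])
  moreover have "finite ?L"
    by (rule finite_grid_is_norm_ball[OF assms(1,2)])
  ultimately have "min_absorbing_exists (roundoff_map \<delta> w) (grid \<delta>)"
    and "min_absorbing (roundoff_map \<delta> w) (grid \<delta>) \<subseteq> ?L"
    using min_absorbing_exists_and_subset_of_finite by blast+
  with \<open>finite ?L\<close> show ?thesis
    by (meson card_mono finite_subset)
qed

end
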